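(* Let $\Gamma$ be a group and $n \ge 0$ an integer. Then the quotient $P\mathcal{S}(\Gamma)/\overline{D^n}(P\mathcal{S}(\Gamma))$ is canonically isomorphic to $\Gamma/D^n(\Gamma)$.
   Context: For a group $\Gamma$, let $\mathcal{S}$ be the family of all normal subgroups $N$ of $\Gamma$ with $\Gamma/N$ soluble; it is directed (the intersection of two members contains a member). Let $\mathcal{C}\mathcal{S}(\Gamma)=\bigcap_{N\in\mathcal{S}}N$. The group $\Gamma/\mathcal{C}\mathcal{S}(\Gamma)$ carries the Hausdorff group topology for which the images of the members of $\mathcal{S}$ form a basis of neighbourhoods of the identity; its completion (with respect to the left uniformity) is the true prosoluble completion $P\mathcal{S}(\Gamma)$, a complete Hausdorff topological group, which can be identified with the inverse limit $\varprojlim_{N\in\mathcal{S}}\Gamma/N$. There is a canonical homomorphism $\Gamma\to P\mathcal{S}(\Gamma)$ with dense image. $D^n(\Gamma)$ denotes the $n$-th term of the derived series ($D^0(\Gamma)=\Gamma$, $D^{n+1}(\Gamma)=[D^n(\Gamma),D^n(\Gamma)]$). For a topological group $G$, the topological derived series is defined by $\overline{D^0}(G)=G$ and $\overline{D^{n+1}}(G)$ = the closure of the subgroup generated by the commutators $a^{-1}b^{-1}ab$ with $a,b\in\overline{D^n}(G)$. *)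

theory Defs
  imports "HOL-Analysis.Analysis" "HOL-Algebra.Algebra"
begin

definition sol_quots :: "('a, 'b) monoid_scheme \<Rightarrow> 'a set set" where
  "sol_quots \<Gamma> = {N. N \<lhd> \<Gamma> \<and> solvable (\<Gamma> Mod N)}"

text \<open>The true prosoluble completion, realised as the inverse limit of the
  quotients Gamma/N (N in sol_quots), i.e. compatible families of cosets.\<close>
definition PS_carrier :: "('a, 'b) monoid_scheme \<Rightarrow> ('a set \<Rightarrow> 'a set) set" where
  "PS_carrier \<Gamma> =
     {x \<in> (\<Pi>\<^sub>E N\<in>sol_quots \<Gamma>. carrier (\<Gamma> Mod N)).
        \<forall>M\<in>sol_quots \<Gamma>. \<forall>N\<in>sol_quots \<Gamma>. M \<subseteq> N \<longrightarrow> x M \<subseteq> x N}"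

definition PS :: "('a, 'b) monoid_scheme \<Rightarrow> ('a set \<Rightarrow> 'a set) monoid" where
  "PS \<Gamma> = \<lparr> carrier = PS_carrier \<Gamma>,
             mult = (\<lambda>x y. \<lambda>N\<in>sol_quots \<Gamma>. x N <#>\<^bsub>\<Gamma>\<^esub> y N),
             one = (\<lambda>N\<in>sol_quots \<Gamma>. N) \<rparr>"

definition PS_topology :: "('a, 'b) monoid_scheme \<Rightarrow> ('a set \<Rightarrow> 'a set) topology" where
  "PS_topology \<Gamma> =
     subtopology (product_topology (\<lambda>N. discrete_topology (carrier (\<Gamma> Mod N))) (sol_quots \<Gamma>))
                 (PS_carrier \<Gamma>)"

definition PS_canon :: "('a, 'b) monoid_scheme \<Rightarrow> 'a \<Rightarrow> ('a set \<Rightarrow> 'a set)" where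
  "PS_canon \<Gamma> g = (\<lambda>N\<in>sol_quots \<Gamma>. N #>\<^bsub>\<Gamma>\<^esub> g)"

definition commutators :: "('c, 'd) monoid_scheme \<Rightarrow> 'c set \<Rightarrow> 'c set" where
  "commutators G H = {inv\<^bsub>G\<^esub> a \<otimes>\<^bsub>G\<^esub> inv\<^bsub>G\<^esub> b \<otimes>\<^bsub>G\<^esub> a \<otimes>\<^bsub>G\<^esub> b | a b. a \<in> H \<and> b \<in> H}"

fun top_derived :: "('c, 'd) monoid_scheme \<Rightarrow> 'c topology \<Rightarrow> nat \<Rightarrow> 'c set" where
  "top_derived G T 0 = carrier G"
| "top_derived G T (Suc n) = T closure_of (generate G (commutators G (top_derived G T n)))"

end

theory Submission
  imports Defs
begin

text \<open>
  Let \<open>D = D\<^sup>n(\<Gamma>)\<close> and let \<open>\<pi>\<close> be the projection of the completion onto the coordinate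
  \<open>\<Gamma>/D\<close>, a continuous homomorphism onto a discrete group. Such a homomorphism maps the
  topological derived series into the derived series, and the n-th derived subgroup of \<open>\<Gamma>/D\<close>
  is trivial, so the n-th closed derived subgroup lies in \<open>ker \<pi>\<close>. Conversely, the \<open>D\<^sup>k(\<Gamma>)\<close> are
  cofinal among the normal subgroups with soluble quotient, so an element of \<open>ker \<pi>\<close> agrees on
  any finitely many coordinates with the image of an element of \<open>D\<close>. Hence \<open>ker \<pi>\<close> is the closure
  of the image of \<open>D\<close>, which lies in the closed n-th derived subgroup. The two subgroups thus
  coincide, and since \<open>\<pi>\<close> composed with the canonical map is the quotient map \<open>\<Gamma> \<rightarrow> \<Gamma>/D\<close>,
  the quotient of the completion by \<open>ker \<pi>\<close> is \<open>\<Gamma>/D\<close>.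
\<close>

section \<open>Derived series and soluble quotients\<close>

abbreviation derived_series :: "('a, 'b) monoid_scheme \<Rightarrow> nat \<Rightarrow> 'a set" where
  "derived_series G k \<equiv> (derived G ^^ k) (carrier G)"

lemma (in group) derived_series_subgroup: "subgroup (derived_series G k) G"
  by (rule exp_of_derived_is_subgroup[OF subgroup_self])

lemma (in group) derived_series_normal: "derived_series G k \<lhd> G"
  by (induction k) (auto intro: derived_is_normal normal_self)

lemma (in group) derived_series_antimono:
  assumes "k \<le> l"
  shows "derived_series G l \<subseteq> derived_series G k"
proof -
  have "derived_series G (Suc m) \<subseteq> derived_series G m" for m
    using derived_incl[OF subset_refl derived_series_subgroup[of m]] by simp
  then show ?thesis
    using assms by (rule lift_Suc_antimono_le[of "derived_series G"])
qed

lemma (in group) rcos_eq_self_iff: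
  assumes "subgroup H G" and "x \<in> carrier G"
  shows "H #> x = H \<longleftrightarrow> x \<in> H"
  using coset_join1 coset_join2 assms by blast

lemma (in normal) derived_series_FactGroup:
  "derived_series (G Mod H) k = (\<lambda>a. H #> a) ` derived_series G k"
proof -
  have "group_hom G (G Mod H) (\<lambda>a. H #> a)"
    using r_coset_hom_Mod factorgroup_is_group is_group by (simp add: group_hom_def group_hom_axioms_def)
  then show ?thesis
    using group_hom.exp_of_derived_img[OF _ subset_refl, of G "G Mod H" _ k]
    by (simp add: carrier_FactGroup)
qed

lemma (in normal) rcos_image_eq_singleton_iff:
  assumes "subgroup K G"
  shows "(\<lambda>a. H #> a) ` K = {H} \<longleftrightarrow> K \<subseteq> H"
proof -
  have "(\<lambda>a. H #> a) ` K = {H} \<longleftrightarrow> (\<forall>a\<in>K. H #> a = H)"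
    using subgroup.one_closed[OF assms] by blast
  also have "\<dots> \<longleftrightarrow> K \<subseteq> H"
    using rcos_eq_self_iff[OF subgroup_axioms] subgroup.mem_carrier[OF assms] by blast
  finally show ?thesis .
qed

lemma (in group) sol_quots_iff:
  "N \<in> sol_quots G \<longleftrightarrow> N \<lhd> G \<and> (\<exists>k. derived_series G k \<subseteq> N)"
proof (cases "N \<lhd> G")
  case True
  then interpret N: normal N G .
  have "solvable (G Mod N) \<longleftrightarrow> (\<exists>k. derived_series G k \<subseteq> N)"
    unfolding group.solvable_iff_trivial_derived_seq[OF N.factorgroup_is_group]
    by (simp add: N.derived_series_FactGroup N.rcos_image_eq_singleton_iff[OF derived_series_subgroup])
  then show ?thesis
    using True by (simp add: sol_quots_def)
qed (simp add: sol_quots_def)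

lemma sol_quots_normal: "N \<in> sol_quots G \<Longrightarrow> N \<lhd> G"
  by (simp add: sol_quots_def)

lemma (in group) derived_series_in_sol_quots: "derived_series G k \<in> sol_quots G"
  using sol_quots_iff derived_series_normal by blast

lemma (in group) sol_quots_directed:
  assumes "finite F" and "F \<subseteq> sol_quots G"
  shows "\<exists>k. \<forall>N\<in>F. derived_series G k \<subseteq> N"
  using assms
proof (induction F rule: finite_induct)
  case (insert M F)
  then obtain k where k: "\<forall>N\<in>F. derived_series G k \<subseteq> N" by blast
  obtain l where l: "derived_series G l \<subseteq> M"
    using insert.prems sol_quots_iff by blast
  have "\<forall>N\<in>insert M F. derived_series G (max k l) \<subseteq> N"
    using k l derived_series_antimono[of k "max k l"] derived_series_antimono[of l "max k l"] by auto
  then show ?case ..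
qed simp

lemma (in group_hom) rcos_kernel_eq:
  assumes "x \<in> carrier G" and "y \<in> carrier G" and "h x = h y"
  shows "kernel G H h #> x = kernel G H h #> y"
  using assms by (intro equalityI FactGroup_subset) simp_all

lemma (in group_hom) group_hom_rcos_comp:
  assumes "K \<lhd> H"
  shows "group_hom G (H Mod K) (\<lambda>g. K #>\<^bsub>H\<^esub> h g)"
proof -
  interpret K: normal K H by fact
  have "(\<lambda>g. K #>\<^bsub>H\<^esub> h g) \<in> hom G (H Mod K)"
  proof (rule homI)
    fix x assume "x \<in> carrier G"
    then show "K #>\<^bsub>H\<^esub> h x \<in> carrier (H Mod K)"
      unfolding carrier_FactGroup by (rule imageI[OF hom_closed])
  next
    fix x y assume "x \<in> carrier G" "y \<in> carrier G"
    then show "K #>\<^bsub>H\<^esub> h (x \<otimes> y) = (K #>\<^bsub>H\<^esub> h x) \<otimes>\<^bsub>H Mod K\<^esub> (K #>\<^bsub>H\<^esub> h y)"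
      by (simp only: mult_FactGroup hom_mult K.rcos_sum hom_closed)
  qed
  then show ?thesis
    by (simp add: group_hom_def group_hom_axioms_def K.factorgroup_is_group)
qed

lemma FactGroup_iso_kernel_comp:
  assumes "group_hom G H f" and "group_hom H Q p"
    and surj: "(\<lambda>g. p (f g)) ` carrier G = carrier Q"
  shows "(\<lambda>C. the_elem ((\<lambda>g. kernel H Q p #>\<^bsub>H\<^esub> f g) ` C))
           \<in> iso (G Mod kernel G Q (\<lambda>g. p (f g))) (H Mod kernel H Q p)"
proof -
  interpret f: group_hom G H f by fact
  interpret p: group_hom H Q p by fact
  let ?K = "kernel H Q p"
  let ?h = "\<lambda>g. ?K #>\<^bsub>H\<^esub> f g"
  interpret h: group_hom G "H Mod ?K" ?h
    by (rule f.group_hom_rcos_comp[OF p.normal_kernel])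
  have "group H"
    using assms(2) by (simp add: group_hom_def)
  have kernel_iff: "?h g = ?K \<longleftrightarrow> p (f g) = \<one>\<^bsub>Q\<^esub>" if "g \<in> carrier G" for g
  proof -
    have "?h g = ?K \<longleftrightarrow> f g \<in> ?K"
      by (rule group.rcos_eq_self_iff[OF \<open>group H\<close> p.subgroup_kernel f.hom_closed[OF that]])
    also have "\<dots> \<longleftrightarrow> p (f g) = \<one>\<^bsub>Q\<^esub>"
      using f.hom_closed[OF that] unfolding kernel_def by blast
    finally show ?thesis .
  qed
  have kernel_eq: "kernel G (H Mod ?K) ?h = kernel G Q (\<lambda>g. p (f g))"
    unfolding kernel_def[of G "H Mod ?K"] kernel_def[of G Q] one_FactGroup
    by (rule Collect_cong) (use kernel_iff in blast)
  have "?h ` carrier G = carrier (H Mod ?K)"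
  proof
    have "?K #>\<^bsub>H\<^esub> x \<in> ?h ` carrier G" if x: "x \<in> carrier H" for x
    proof -
      have "p x \<in> (\<lambda>g. p (f g)) ` carrier G"
        using x surj by simp
      then obtain g where "g \<in> carrier G" and "p x = p (f g)"
        by (rule imageE) simp
      then show ?thesis
        using p.rcos_kernel_eq[OF x] by (intro image_eqI) simp_all
    qed
    then show "carrier (H Mod ?K) \<subseteq> ?h ` carrier G"
      unfolding carrier_FactGroup by (rule image_subsetI)
  qed (rule image_subsetI, rule h.hom_closed)
  from h.FactGroup_iso_set[OF this] show ?thesis
    unfolding kernel_eq .
qed

section \<open>Commutators and the topological derived series\<close>

lemma commutators_mono: "A \<subseteq> B \<Longrightarrow> commutators G A \<subseteq> commutators G B"
  unfolding commutators_def by auto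

lemma (in group) commutators_subset_carrier:
  assumes "A \<subseteq> carrier G"
  shows "commutators G A \<subseteq> carrier G"
  using assms by (auto simp: commutators_def subset_iff)

lemma (in group) commutators_eq_derived_set:
  assumes "subgroup H G"
  shows "commutators G H = derived_set G H"
proof (intro equalityI subsetI)
  fix z assume "z \<in> commutators G H"
  then obtain a b where ab: "a \<in> H" "b \<in> H" "z = inv a \<otimes> inv b \<otimes> a \<otimes> b"
    unfolding commutators_def by blast
  then have "z = inv a \<otimes> inv b \<otimes> inv (inv a) \<otimes> inv (inv b)"
    using subgroup.mem_carrier[OF assms] by simp
  then show "z \<in> derived_set G H"
    using ab subgroup.m_inv_closed[OF assms] by blast
next
  fix z assume "z \<in> derived_set G H"
  then obtain a b where ab: "a \<in> H" "b \<in> H" "z = a \<otimes> b \<otimes> inv a \<otimes> inv b"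
    by blast
  then have "z = inv (inv a) \<otimes> inv (inv b) \<otimes> inv a \<otimes> inv b"
    using subgroup.mem_carrier[OF assms] by simp
  then show "z \<in> commutators G H"
    unfolding commutators_def using ab subgroup.m_inv_closed[OF assms] by blast
qed

lemma (in group_hom) image_commutators:
  assumes "A \<subseteq> carrier G"
  shows "h ` commutators G A = commutators H (h ` A)"
proof -
  have hom_comm: "h (inv a \<otimes> inv b \<otimes> a \<otimes> b)
      = inv\<^bsub>H\<^esub> h a \<otimes>\<^bsub>H\<^esub> inv\<^bsub>H\<^esub> h b \<otimes>\<^bsub>H\<^esub> h a \<otimes>\<^bsub>H\<^esub> h b"
    if "a \<in> A" "b \<in> A" for a b
    using that assms by (simp add: subset_iff)
  show ?thesis
  proof (intro equalityI subsetI)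
    fix z assume "z \<in> h ` commutators G A"
    then obtain a b where ab: "a \<in> A" "b \<in> A"
      and z: "z = h (inv a \<otimes> inv b \<otimes> a \<otimes> b)"
      unfolding commutators_def by auto
    show "z \<in> commutators H (h ` A)"
      unfolding commutators_def z hom_comm[OF ab] using ab
      by (intro CollectI exI[of _ "h a"] exI[of _ "h b"]) simp
  next
    fix z assume "z \<in> commutators H (h ` A)"
    then obtain a b where ab: "a \<in> A" "b \<in> A"
      and z: "z = inv\<^bsub>H\<^esub> h a \<otimes>\<^bsub>H\<^esub> inv\<^bsub>H\<^esub> h b \<otimes>\<^bsub>H\<^esub> h a \<otimes>\<^bsub>H\<^esub> h b"
      unfolding commutators_def by auto
    have "inv a \<otimes> inv b \<otimes> a \<otimes> b \<in> commutators G A"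
      unfolding commutators_def using ab by (intro CollectI exI[of _ a] exI[of _ b]) simp
    then show "z \<in> h ` commutators G A"
      unfolding z hom_comm[OF ab, symmetric] by (rule imageI)
  qed
qed

lemma top_derived_subset_carrier:
  assumes "topspace T = carrier G"
  shows "top_derived G T k \<subseteq> carrier G"
  using assms closure_of_subset_topspace[of T] by (cases k) auto

lemma closedin_top_derived:
  assumes "topspace T = carrier G"
  shows "closedin T (top_derived G T k)"
  using assms closedin_topspace[of T] by (cases k) auto

lemma (in group) derived_series_subset_top_derived:
  assumes "topspace T = carrier G"
  shows "derived_series G k \<subseteq> top_derived G T k"
proof (induction k)
  case (Suc k)
  let ?S = "commutators G (top_derived G T k)"
  have S_carrier: "?S \<subseteq> carrier G"
    by (rule commutators_subset_carrier[OF top_derived_subset_carrier[OF assms]])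
  have "derived_series G (Suc k) = generate G (commutators G (derived_series G k))"
    by (simp add: derived_def commutators_eq_derived_set[OF derived_series_subgroup])
  also have "\<dots> \<subseteq> generate G ?S"
    by (rule mono_generate[OF commutators_mono[OF Suc.IH]])
  also have "\<dots> \<subseteq> T closure_of generate G ?S"
    by (rule closure_of_subset) (use generate_incl[OF S_carrier] assms in simp)
  finally show ?case by simp
qed simp

lemma (in group_hom) image_top_derived_subset_derived_series:
  assumes "topspace T = carrier G" and "continuous_map T (discrete_topology (carrier H)) h"
  shows "h ` top_derived G T k \<subseteq> derived_series H k"
proof (induction k)
  case (Suc k)
  let ?S = "commutators G (top_derived G T k)"
  let ?P = "{x \<in> topspace T. h x \<in> derived_series H (Suc k)}"
  have D_carrier: "top_derived G T k \<subseteq> carrier G"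
    by (rule top_derived_subset_carrier[OF assms(1)])
  have S_carrier: "?S \<subseteq> carrier G"
    by (rule G.commutators_subset_carrier[OF D_carrier])
  have "h ` generate G ?S = generate H (commutators H (h ` top_derived G T k))"
    using generate_img[OF S_carrier] image_commutators[OF D_carrier] by simp
  also have "\<dots> \<subseteq> generate H (commutators H (derived_series H k))"
    by (rule H.mono_generate[OF commutators_mono[OF Suc.IH]])
  also have "\<dots> = derived_series H (Suc k)"
    by (simp add: derived_def H.commutators_eq_derived_set[OF H.derived_series_subgroup])
  finally have "generate G ?S \<subseteq> ?P"
    using G.generate_incl[OF S_carrier] assms(1) by blast
  moreover have "closedin T ?P"
    by (rule closedin_continuous_map_preimage[OF assms(2)])
      (simp only: closedin_discrete_topology subgroup.subset[OF H.derived_series_subgroup])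
  ultimately have "T closure_of generate G ?S \<subseteq> ?P"
    by (rule closure_of_minimal)
  then show ?case by auto
qed auto

lemma in_closure_of_discrete_product:
  assumes "S \<subseteq> (\<Pi>\<^sub>E i\<in>I. Y i)" and "A \<subseteq> S" and "x \<in> S"
    and agree: "\<And>F. finite F \<Longrightarrow> F \<subseteq> I \<Longrightarrow> \<exists>y\<in>A. \<forall>i\<in>F. y i = x i"
  shows "x \<in> subtopology (product_topology (\<lambda>i. discrete_topology (Y i)) I) S closure_of A"
    (is "x \<in> subtopology ?P S closure_of A")
  unfolding in_closure_of
proof (intro conjI allI impI)
  show "x \<in> topspace (subtopology ?P S)"
    using assms by auto
  fix U assume U: "x \<in> U \<and> openin (subtopology ?P S) U"
  then obtain V where V: "openin ?P V" "U = V \<inter> S"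
    by (auto simp: openin_subtopology)
  then obtain W where W: "finite {i \<in> I. W i \<noteq> Y i}" "x \<in> Pi\<^sub>E I W" "Pi\<^sub>E I W \<subseteq> V"
    using U unfolding openin_product_topology_alt by force
  obtain y where y: "y \<in> A" "\<forall>i\<in>{i \<in> I. W i \<noteq> Y i}. y i = x i"
    using agree[OF W(1)] by blast
  have "y \<in> (\<Pi>\<^sub>E i\<in>I. Y i)"
    using y(1) assms(1,2) by blast
  then have "y \<in> Pi\<^sub>E I W"
    using y(2) W(2) by (auto simp: PiE_iff)
  then show "\<exists>y. y \<in> A \<and> y \<in> U"
    using y(1) assms(2) V(2) W(3) by blast
qed

section \<open>The group structure of the prosoluble completion\<close>

lemma (in group) PS_carrier_component:
  assumes "x \<in> PS_carrier G" and "N \<in> sol_quots G"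
  shows "\<exists>a\<in>carrier G. x N = N #> a"
  using assms unfolding PS_carrier_def carrier_FactGroup PiE_iff by blast

lemma (in group) PS_carrier_iff:
  "x \<in> PS_carrier G \<longleftrightarrow> x \<in> extensional (sol_quots G) \<and>
     (\<forall>M\<in>sol_quots G. \<exists>a\<in>carrier G. \<forall>N\<in>sol_quots G. M \<subseteq> N \<longrightarrow> x N = N #> a)"
  (is "_ \<longleftrightarrow> ?thread")
proof
  assume x: "x \<in> PS_carrier G"
  have "\<exists>a\<in>carrier G. \<forall>N\<in>sol_quots G. M \<subseteq> N \<longrightarrow> x N = N #> a" if M: "M \<in> sol_quots G" for M
  proof -
    obtain a where a: "a \<in> carrier G" "x M = M #> a"
      using PS_carrier_component[OF x M] by blast
    have "x N = N #> a" if N: "N \<in> sol_quots G" "M \<subseteq> N" for N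
    proof -
      obtain b where b: "b \<in> carrier G" "x N = N #> b"
        using PS_carrier_component[OF x N(1)] by blast
      have "a \<in> x M"
        using a rcos_self normal_imp_subgroup[OF sol_quots_normal[OF M]] by simp
      also have "x M \<subseteq> x N"
        using x M N unfolding PS_carrier_def by blast
      finally show ?thesis
        using b repr_independence normal_imp_subgroup[OF sol_quots_normal[OF N(1)]] by simp
    qed
    then show ?thesis using a(1) by blast
  qed
  then show ?thread
    using x by (auto simp: PS_carrier_def PiE_iff)
next
  assume x: ?thread
  have "x N \<in> carrier (G Mod N)" if "N \<in> sol_quots G" for N
    using x that by (auto simp: carrier_FactGroup)
  moreover have "x M \<subseteq> x N" if "M \<in> sol_quots G" "N \<in> sol_quots G" "M \<subseteq> N" for M N
    using x that by (force simp: r_coset_def)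
  ultimately show "x \<in> PS_carrier G"
    using x by (simp add: PS_carrier_def PiE_iff)
qed

lemma (in group) PS_canon_in_PS_carrier:
  assumes "g \<in> carrier G"
  shows "PS_canon G g \<in> PS_carrier G"
  unfolding PS_carrier_iff PS_canon_def using assms by auto

lemma (in normal) inv_FactGroup_rcos:
  assumes "a \<in> carrier G"
  shows "inv\<^bsub>G Mod H\<^esub> (H #> a) = H #> inv a"
  using assms inv_FactGroup rcos_inv by (simp add: carrier_FactGroup)

lemma (in group) PS_carrier_subgroup:
  "subgroup (PS_carrier G) (product_group (sol_quots G) (\<lambda>N. G Mod N))"
  (is "subgroup _ ?P")
proof -
  have quotients: "\<And>N. N \<in> sol_quots G \<Longrightarrow> group (G Mod N)"
    by (simp add: sol_quots_normal normal.factorgroup_is_group)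
  show ?thesis
  proof (rule group.subgroupI[OF product_group[OF quotients]])
    show "PS_carrier G \<subseteq> carrier ?P"
      by (auto simp: PS_carrier_def)
    show "PS_carrier G \<noteq> {}"
      using PS_canon_in_PS_carrier[OF one_closed] by blast
  next
    fix x assume x: "x \<in> PS_carrier G"
    have "inv\<^bsub>?P\<^esub> x = (\<lambda>N\<in>sol_quots G. inv\<^bsub>G Mod N\<^esub> x N)"
      using x quotients by (simp add: PS_carrier_def)
    moreover have "\<exists>b\<in>carrier G. \<forall>N\<in>sol_quots G. M \<subseteq> N \<longrightarrow> inv\<^bsub>G Mod N\<^esub> x N = N #> b"
      if "M \<in> sol_quots G" for M
    proof -
      obtain a where "a \<in> carrier G" "\<forall>N\<in>sol_quots G. M \<subseteq> N \<longrightarrow> x N = N #> a"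
        using x \<open>M \<in> sol_quots G\<close> unfolding PS_carrier_iff by blast
      then show ?thesis
        by (intro bexI[of _ "inv a"]) (simp_all add: normal.inv_FactGroup_rcos sol_quots_normal)
    qed
    ultimately show "inv\<^bsub>?P\<^esub> x \<in> PS_carrier G"
      unfolding PS_carrier_iff by simp
  next
    fix x y assume x: "x \<in> PS_carrier G" and y: "y \<in> PS_carrier G"
    have "\<exists>c\<in>carrier G. \<forall>N\<in>sol_quots G. M \<subseteq> N \<longrightarrow> x N <#> y N = N #> c"
      if "M \<in> sol_quots G" for M
    proof -
      obtain a where "a \<in> carrier G" "\<forall>N\<in>sol_quots G. M \<subseteq> N \<longrightarrow> x N = N #> a"
        using x \<open>M \<in> sol_quots G\<close> unfolding PS_carrier_iff by blast
      moreover obtain b where "b \<in> carrier G" "\<forall>N\<in>sol_quots G. M \<subseteq> N \<longrightarrow> y N = N #> b"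
        using y \<open>M \<in> sol_quots G\<close> unfolding PS_carrier_iff by blast
      ultimately show ?thesis
        by (intro bexI[of _ "a \<otimes> b"]) (simp_all add: normal.rcos_sum sol_quots_normal)
    qed
    then show "x \<otimes>\<^bsub>?P\<^esub> y \<in> PS_carrier G"
      unfolding PS_carrier_iff by simp
  qed
qed

lemma (in group) group_PS: "group (PS G)"
proof -
  have "PS G = (product_group (sol_quots G) (\<lambda>N. G Mod N))\<lparr>carrier := PS_carrier G\<rparr>"
    by (simp add: PS_def product_group_def)
  then show ?thesis
    using group.subgroup_imp_group[OF _ PS_carrier_subgroup]
    by (simp add: sol_quots_normal normal.factorgroup_is_group)
qed

lemma carrier_PS [simp]: "carrier (PS G) = PS_carrier G"
  by (simp add: PS_def)

lemma mult_PS: "x \<otimes>\<^bsub>PS G\<^esub> y = (\<lambda>N\<in>sol_quots G. x N <#>\<^bsub>G\<^esub> y N)"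
  by (simp add: PS_def)

lemma (in group) group_hom_PS_canon: "group_hom G (PS G) (PS_canon G)"
proof -
  have "PS_canon G (a \<otimes> b) = PS_canon G a \<otimes>\<^bsub>PS G\<^esub> PS_canon G b"
    if "a \<in> carrier G" "b \<in> carrier G" for a b
    using that by (auto simp: PS_canon_def mult_PS normal.rcos_sum sol_quots_normal intro!: restrict_ext)
  then show ?thesis
    using PS_canon_in_PS_carrier group_PS is_group
    by (simp add: group_hom_def group_hom_axioms_def hom_def)
qed

lemma (in group) group_hom_PS_projection:
  assumes "N \<in> sol_quots G"
  shows "group_hom (PS G) (G Mod N) (\<lambda>x. x N)"
proof -
  have "(\<lambda>x. x N) \<in> hom (PS G) (G Mod N)"
    using assms by (auto simp: hom_def PS_carrier_def mult_PS)
  then show ?thesis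
    using group_PS normal.factorgroup_is_group[OF sol_quots_normal[OF assms]]
    by (simp add: group_hom_def group_hom_axioms_def)
qed

section \<open>The closed derived subgroups of the completion\<close>

lemma topspace_PS_topology [simp]: "topspace (PS_topology G) = PS_carrier G"
  unfolding PS_topology_def by (auto simp: PS_carrier_def)

lemma continuous_map_PS_projection:
  assumes "N \<in> sol_quots G"
  shows "continuous_map (PS_topology G) (discrete_topology (carrier (G Mod N))) (\<lambda>x. x N)"
  unfolding PS_topology_def
  by (rule continuous_map_from_subtopology) (rule continuous_map_product_projection[OF assms])

lemma (in group) PS_carrier_approx:
  assumes "x \<in> PS_carrier G" and "finite F" and "F \<subseteq> sol_quots G"
  shows "\<exists>g\<in>carrier G. \<forall>N\<in>F. x N = N #> g"
proof -
  obtain k where k: "\<forall>N\<in>F. derived_series G k \<subseteq> N"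
    using sol_quots_directed[OF assms(2,3)] by blast
  obtain g where "g \<in> carrier G"
    "\<forall>N\<in>sol_quots G. derived_series G k \<subseteq> N \<longrightarrow> x N = N #> g"
    using assms(1) derived_series_in_sol_quots[of k] unfolding PS_carrier_iff by blast
  then show ?thesis
    using k assms(3) by blast
qed

lemma (in group) kernel_PS_projection_subset_closure:
  "kernel (PS G) (G Mod derived_series G n) (\<lambda>x. x (derived_series G n))
     \<subseteq> PS_topology G closure_of (PS_canon G ` derived_series G n)"
proof
  let ?D = "derived_series G n"
  fix x assume "x \<in> kernel (PS G) (G Mod ?D) (\<lambda>x. x ?D)"
  then have x: "x \<in> PS_carrier G" "x ?D = ?D"
    by (simp_all add: kernel_def)
  show "x \<in> PS_topology G closure_of (PS_canon G ` ?D)"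
    unfolding PS_topology_def
  proof (rule in_closure_of_discrete_product)
    show "PS_carrier G \<subseteq> (\<Pi>\<^sub>E N\<in>sol_quots G. carrier (G Mod N))"
      by (auto simp: PS_carrier_def)
    show "PS_canon G ` ?D \<subseteq> PS_carrier G"
      using PS_canon_in_PS_carrier exp_of_derived_in_carrier[OF subset_refl] by blast
    fix F assume F: "finite F" "F \<subseteq> sol_quots G"
    then obtain g where g: "g \<in> carrier G" "\<forall>N\<in>insert ?D F. x N = N #> g"
      using PS_carrier_approx[OF x(1), of "insert ?D F"] derived_series_in_sol_quots by auto
    have "g \<in> ?D"
      using g x(2) rcos_eq_self_iff[OF derived_series_subgroup] by auto
    moreover have "\<forall>N\<in>F. PS_canon G g N = x N"
      using g F by (auto simp: PS_canon_def)
    ultimately show "\<exists>y\<in>PS_canon G ` ?D. \<forall>N\<in>F. y N = x N"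
      by (intro bexI[of _ "PS_canon G g"] imageI)
  qed (use x in simp)
qed

lemma (in group) top_derived_PS_eq_kernel:
  "top_derived (PS G) (PS_topology G) n
     = kernel (PS G) (G Mod derived_series G n) (\<lambda>x. x (derived_series G n))"
  (is "?TD = kernel (PS G) (G Mod ?D) ?\<pi>")
proof
  interpret \<pi>: group_hom "PS G" "G Mod ?D" ?\<pi>
    by (rule group_hom_PS_projection[OF derived_series_in_sol_quots])
  interpret D: normal ?D G
    by (rule derived_series_normal)
  have "?\<pi> ` ?TD \<subseteq> derived_series (G Mod ?D) n"
    by (rule \<pi>.image_top_derived_subset_derived_series)
      (simp_all add: continuous_map_PS_projection derived_series_in_sol_quots)
  also have "\<dots> = {?D}"
    by (simp add: D.derived_series_FactGroup D.rcos_image_eq_singleton_iff[OF derived_series_subgroup])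
  finally show "?TD \<subseteq> kernel (PS G) (G Mod ?D) ?\<pi>"
    using top_derived_subset_carrier[of "PS_topology G" "PS G" n] by (auto simp: kernel_def)
next
  interpret canon: group_hom G "PS G" "PS_canon G"
    by (rule group_hom_PS_canon)
  have "PS_canon G ` ?D = (derived (PS G) ^^ n) (PS_canon G ` carrier G)"
    by (rule canon.exp_of_derived_img[OF subset_refl, symmetric])
  also have "\<dots> \<subseteq> derived_series (PS G) n"
    by (rule group.mono_exp_of_derived[OF group_PS]) (use PS_canon_in_PS_carrier in auto)
  also have "\<dots> \<subseteq> ?TD"
    by (rule group.derived_series_subset_top_derived[OF group_PS]) simp
  finally have "PS_topology G closure_of (PS_canon G ` ?D) \<subseteq> ?TD"
    by (rule closure_of_minimal) (rule closedin_top_derived, simp)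
  then show "kernel (PS G) (G Mod ?D) ?\<pi> \<subseteq> ?TD"
    using kernel_PS_projection_subset_closure by blast
qed

theorem mainTheorem1:
  fixes \<Gamma> :: "('a, 'b) monoid_scheme" and n :: nat
  assumes "group \<Gamma>"
  shows "(\<lambda>C. the_elem ((\<lambda>g. r_coset (PS \<Gamma>) (top_derived (PS \<Gamma>) (PS_topology \<Gamma>) n) (PS_canon \<Gamma> g)) ` C))
           \<in> iso (\<Gamma> Mod ((derived \<Gamma> ^^ n) (carrier \<Gamma>)))
                 (PS \<Gamma> Mod top_derived (PS \<Gamma>) (PS_topology \<Gamma>) n)"
proof -
  interpret group \<Gamma> by fact
  let ?D = "derived_series \<Gamma> n"
  have D: "?D \<in> sol_quots \<Gamma>"
    by (rule derived_series_in_sol_quots)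
  have canon_D: "PS_canon \<Gamma> g ?D = ?D #>\<^bsub>\<Gamma>\<^esub> g" for g
    using D by (simp add: PS_canon_def)
  have "kernel \<Gamma> (\<Gamma> Mod ?D) (\<lambda>g. PS_canon \<Gamma> g ?D) = ?D"
    using rcos_eq_self_iff[OF derived_series_subgroup] subgroup.mem_carrier[OF derived_series_subgroup]
    by (auto simp: kernel_def canon_D)
  moreover have "(\<lambda>g. PS_canon \<Gamma> g ?D) ` carrier \<Gamma> = carrier (\<Gamma> Mod ?D)"
    by (simp add: canon_D carrier_FactGroup)
  ultimately show ?thesis
    using FactGroup_iso_kernel_comp[OF group_hom_PS_canon group_hom_PS_projection[OF D]]
    by (simp add: top_derived_PS_eq_kernel)
qed

end
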